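(* Let $(G,\cdot,\curlywedge,\xi,\delta)$ satisfy the standing assumptions below. For any subsets $H,H_1,H_2$ of $G$: (a) $H\subseteq F_\xi(H)$; (b) if $H_1\subseteq H_2$ then $F_\xi(H_1)\subseteq F_\xi(H_2)$; (c) $F_\xi(H)=H$ for every $f_\xi$-closed subset $H$ of $G$.
   Context: Standing assumptions: $(G,\cdot)$ is a semigroup, $(G,\curlywedge)$ a semilattice on $G$, $\xi,\delta\subseteq G\times G$. Write $x\leqslant y$ iff $x\curlywedge y=x$ (semilattice order $\zeta$), $x\downarrow y$ iff $(x,y)\in\xi$, $x\vdash y$ iff $(x,y)\in\delta$. Assume $\xi$ is left regular ($(u,v)\in\xi\Rightarrow(xu,xv)\in\xi$), $\zeta\subseteq\xi$, $\delta$ is a left ideal ($(x,y)\in\delta\Rightarrow(ux,y)\in\delta$), and for all $x,y,z,u,v\in G$: $x(y\curlywedge z)=xy\curlywedge xz$; $x\leqslant y\wedge u\leqslant v\wedge y\downarrow v\Rightarrow u\downarrow x$; $x\downarrow y\Rightarrow(x\curlywedge y)u=xu\curlywedge yu$. $G^*=G\cup\{e\}$ is $(G,\cdot)$ with a new identity $e$ adjoined, with conventions $e\leqslant e$, $e\vdash e$, $x\vdash e$ for all $x\in G$. $a\boxdot b\leqslant c$ abbreviates $a\vdash b\wedge ab\leqslant c$. For $H\subseteq G$, $F_\xi(H)=\{z\in G:\exists u,v\in G,\ \exists x,y,t\in G^*$ with $u\downarrow v$, $(u\curlywedge v)x\boxdot y\leqslant zt$, $u\in H$, $vx\in H\}$.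 A subset $H\subseteq G$ is $f_\xi$-closed if for all $x,y,t\in G^*$ and $z,u,v\in G$: $u\downarrow v\wedge(u\curlywedge v)x\boxdot y\leqslant zt\wedge u\in H\wedge vx\in H\Rightarrow z\in H$. *)

theory Defs
  imports Main
begin

text \<open>G is the carrier type 'a. G* = G \<union> {e} is modelled as 'a option, with None = e.
  mult is the semigroup product, meet the semilattice operation, xi and delta relations on G.\<close>

definition sleq :: "('a \<Rightarrow> 'a \<Rightarrow> 'a) \<Rightarrow> 'a \<Rightarrow> 'a \<Rightarrow> bool" where
  "sleq meet x y \<longleftrightarrow> meet x y = x"

definition standing ::
  "('a \<Rightarrow> 'a \<Rightarrow> 'a) \<Rightarrow> ('a \<Rightarrow> 'a \<Rightarrow> 'a) \<Rightarrow> ('a \<times> 'a) set \<Rightarrow> ('a \<times> 'a) set \<Rightarrow> bool" where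
  "standing mult meet xi delta \<longleftrightarrow>
     (\<forall>x y z. mult (mult x y) z = mult x (mult y z)) \<and>
     (\<forall>x y z. meet (meet x y) z = meet x (meet y z)) \<and>
     (\<forall>x y. meet x y = meet y x) \<and>
     (\<forall>x. meet x x = x) \<and>
     (\<forall>x u v. (u, v) \<in> xi \<longrightarrow> (mult x u, mult x v) \<in> xi) \<and>
     (\<forall>x y. sleq meet x y \<longrightarrow> (x, y) \<in> xi) \<and>
     (\<forall>x y u. (x, y) \<in> delta \<longrightarrow> (mult u x, y) \<in> delta) \<and>
     (\<forall>x y z. mult x (meet y z) = meet (mult x y) (mult x z)) \<and>
     (\<forall>x y u v. sleq meet x y \<and> sleq meet u v \<and> (y, v) \<in> xi \<longrightarrow> (u, x) \<in> xi) \<and>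
     (\<forall>x y u. (x, y) \<in> xi \<longrightarrow> mult (meet x y) u = meet (mult x u) (mult y u))"

fun rmul :: "('a \<Rightarrow> 'a \<Rightarrow> 'a) \<Rightarrow> 'a \<Rightarrow> 'a option \<Rightarrow> 'a" where
  "rmul mult a None = a"
| "rmul mult a (Some x) = mult a x"

fun dvdash :: "('a \<times> 'a) set \<Rightarrow> 'a \<Rightarrow> 'a option \<Rightarrow> bool" where
  "dvdash delta a None = True"
| "dvdash delta a (Some y) = ((a, y) \<in> delta)"

definition boxle ::
  "('a \<Rightarrow> 'a \<Rightarrow> 'a) \<Rightarrow> ('a \<Rightarrow> 'a \<Rightarrow> 'a) \<Rightarrow> ('a \<times> 'a) set \<Rightarrow> 'a \<Rightarrow> 'a option \<Rightarrow> 'a \<Rightarrow> bool" where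
  "boxle mult meet delta a b c \<longleftrightarrow> dvdash delta a b \<and> sleq meet (rmul mult a b) c"

definition F_xi ::
  "('a \<Rightarrow> 'a \<Rightarrow> 'a) \<Rightarrow> ('a \<Rightarrow> 'a \<Rightarrow> 'a) \<Rightarrow> ('a \<times> 'a) set \<Rightarrow> ('a \<times> 'a) set \<Rightarrow> 'a set \<Rightarrow> 'a set" where
  "F_xi mult meet xi delta H = {z. \<exists>u v x y t. (u, v) \<in> xi \<and>
      boxle mult meet delta (rmul mult (meet u v) x) y (rmul mult z t) \<and>
      u \<in> H \<and> rmul mult v x \<in> H}"

definition f_xi_closed ::
  "('a \<Rightarrow> 'a \<Rightarrow> 'a) \<Rightarrow> ('a \<Rightarrow> 'a \<Rightarrow> 'a) \<Rightarrow> ('a \<times> 'a) set \<Rightarrow> ('a \<times> 'a) set \<Rightarrow> 'a set \<Rightarrow> bool" where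
  "f_xi_closed mult meet xi delta H \<longleftrightarrow>
     (\<forall>x y t z u v. (u, v) \<in> xi \<and>
        boxle mult meet delta (rmul mult (meet u v) x) y (rmul mult z t) \<and>
        u \<in> H \<and> rmul mult v x \<in> H \<longrightarrow> z \<in> H)"

end

theory Submission
  imports Defs
begin

text \<open>Every z of H is recovered with u = v = z and x = y = t = e: since the semilattice
  order is contained in xi and meet is idempotent, (z, z) \<in> xi and z \<curlywedge> z = z \<le> z.
  Monotonicity is immediate, and closedness says precisely that F_xi H \<subseteq> H.\<close>

lemma standing_xi_refl:
  assumes "standing mult meet xi delta"
  shows "(x, x) \<in> xi"
  using assms unfolding standing_def sleq_def by blast

lemma subset_F_xi:
  assumes "standing mult meet xi delta"
  shows "H \<subseteq> F_xi mult meet xi delta H"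
proof
  fix z assume "z \<in> H"
  have "(z, z) \<in> xi" using standing_xi_refl[OF assms] .
  moreover have "meet z z = z" using assms unfolding standing_def by blast
  ultimately have "(z, z) \<in> xi \<and> boxle mult meet delta (rmul mult (meet z z) None) None (rmul mult z None)
      \<and> z \<in> H \<and> rmul mult z None \<in> H"
    using \<open>z \<in> H\<close> by (simp add: boxle_def sleq_def)
  then show "z \<in> F_xi mult meet xi delta H"
    unfolding F_xi_def by blast
qed

lemma F_xi_mono:
  "H1 \<subseteq> H2 \<Longrightarrow> F_xi mult meet xi delta H1 \<subseteq> F_xi mult meet xi delta H2"
  unfolding F_xi_def by blast

lemma f_xi_closed_iff_F_xi_subset:
  "f_xi_closed mult meet xi delta H \<longleftrightarrow> F_xi mult meet xi delta H \<subseteq> H"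
  unfolding f_xi_closed_def F_xi_def by blast

theorem lemma2:
  fixes mult meet :: "'a \<Rightarrow> 'a \<Rightarrow> 'a" and xi delta :: "('a \<times> 'a) set"
  assumes "standing mult meet xi delta"
  shows "(\<forall>H. H \<subseteq> F_xi mult meet xi delta H)
       \<and> (\<forall>H1 H2. H1 \<subseteq> H2 \<longrightarrow> F_xi mult meet xi delta H1 \<subseteq> F_xi mult meet xi delta H2)
       \<and> (\<forall>H. f_xi_closed mult meet xi delta H \<longrightarrow> F_xi mult meet xi delta H = H)"
  using subset_F_xi[OF assms] F_xi_mono f_xi_closed_iff_F_xi_subset
  by (metis subset_antisym)

end
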